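(* Let $S$ be a countably compact Hausdorff topological Clifford semigroup which is a strong semilattice of topological groups. The following are equivalent: (1) $S$ is metrizable; (2) $E(S)$ is a $G_\delta$-subset of $S$; (3) for every $e\in E(S)$, the singleton $\{e\}$ is a $G_\delta$-subset of $G_e$.
   Context: A Clifford semigroup is an inverse semigroup (each $x$ has a unique $x^{-1}$ with $xx^{-1}x=x$, $x^{-1}xx^{-1}=x^{-1}$) with $xx^{-1}=x^{-1}x$ for all $x$; topological means multiplication and inversion are continuous. $E(S)$ is the set of idempotents, ordered by $e\le f\iff ef=e$; $G_e:=\{x: xx^{-1}=e\}$; $\varphi_{f,e}\colon G_f\to G_e$, $x\mapsto ex$. $S$ is a strong semilattice of topological groups if the bonding maps are continuous and the topology of $S$ is the disjoint-union topology of the subspaces $G_e$. A $G_\delta$-subset is a countable intersection of open sets. Known fact that may be used (Metrizability of Clifford topological semigroups, Thm 3.4): a countably compact Hausdorff topological Clifford semigroup $S$ is metrizable provided $E(S)$ is a metrizable $G_\delta$-subset of $S$. *)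

theory Defs
  imports "HOL-Analysis.Analysis"
begin

definition clifford_inv :: "'a set \<Rightarrow> ('a \<Rightarrow> 'a \<Rightarrow> 'a) \<Rightarrow> 'a \<Rightarrow> 'a" where
  "clifford_inv S m x = (THE y. y \<in> S \<and> m (m x y) x = x \<and> m (m y x) y = y)"

definition clifford_semigroup :: "'a set \<Rightarrow> ('a \<Rightarrow> 'a \<Rightarrow> 'a) \<Rightarrow> bool" where
  "clifford_semigroup S m \<longleftrightarrow>
     (\<forall>x\<in>S. \<forall>y\<in>S. m x y \<in> S) \<and>
     (\<forall>x\<in>S. \<forall>y\<in>S. \<forall>z\<in>S. m (m x y) z = m x (m y z)) \<and>
     (\<forall>x\<in>S. \<exists>!y. y \<in> S \<and> m (m x y) x = x \<and> m (m y x) y = y) \<and>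
     (\<forall>x\<in>S. m x (clifford_inv S m x) = m (clifford_inv S m x) x)"

definition topological_clifford_semigroup :: "'a topology \<Rightarrow> ('a \<Rightarrow> 'a \<Rightarrow> 'a) \<Rightarrow> bool" where
  "topological_clifford_semigroup X m \<longleftrightarrow>
     clifford_semigroup (topspace X) m \<and>
     continuous_map (prod_topology X X) X (\<lambda>(x, y). m x y) \<and>
     continuous_map X X (clifford_inv (topspace X) m)"

definition idempotents :: "'a set \<Rightarrow> ('a \<Rightarrow> 'a \<Rightarrow> 'a) \<Rightarrow> 'a set" where
  "idempotents S m = {e \<in> S. m e e = e}"

definition group_component :: "'a set \<Rightarrow> ('a \<Rightarrow> 'a \<Rightarrow> 'a) \<Rightarrow> 'a \<Rightarrow> 'a set" where
  "group_component S m e = {x \<in> S. m x (clifford_inv S m x) = e}"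

text \<open>Strong semilattice of topological groups: the bonding maps
  G_f \<rightarrow> G_e, x \<mapsto> e x (for idempotents e \<le> f, i.e. e f = e) are continuous,
  and the topology of S is the disjoint-union topology of the subspaces G_e.\<close>
definition strong_semilattice_of_top_groups :: "'a topology \<Rightarrow> ('a \<Rightarrow> 'a \<Rightarrow> 'a) \<Rightarrow> bool" where
  "strong_semilattice_of_top_groups X m \<longleftrightarrow>
     (let S = topspace X; E = idempotents S m; G = group_component S m in
       (\<forall>e\<in>E. \<forall>f\<in>E. m e f = e \<longrightarrow>
          continuous_map (subtopology X (G f)) (subtopology X (G e)) (\<lambda>x. m e x)) \<and>
       (\<forall>U. U \<subseteq> S \<longrightarrow>
          (openin X U \<longleftrightarrow> (\<forall>e\<in>E. openin (subtopology X (G e)) (U \<inter> G e)))))"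

definition countably_compact_space :: "'a topology \<Rightarrow> bool" where
  "countably_compact_space X \<longleftrightarrow>
     (\<forall>\<U>. countable \<U> \<and> (\<forall>U\<in>\<U>. openin X U) \<and> topspace X \<subseteq> \<Union>\<U> \<longrightarrow>
        (\<exists>\<F>\<subseteq>\<U>. finite \<F> \<and> topspace X \<subseteq> \<Union>\<F>))"

end

theory Submission
  imports Defs
begin

text \<open>
  The group components \<open>G\<^sub>e\<close> are pairwise disjoint clopen sets covering \<open>S\<close>, so countable
  compactness makes \<open>E(S)\<close> finite. Since \<open>E(S) \<inter> G\<^sub>e = {e}\<close> with \<open>G\<^sub>e\<close> open, this gives
  (2) \<open>\<longleftrightarrow>\<close> (3), and a metrizable \<open>S\<close> has the finite closed set \<open>E(S)\<close> as a \<open>G\<^sub>\<delta>\<close>-set.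
  Conversely, each \<open>G\<^sub>e\<close> is a countably compact topological group, hence regular and
  \<open>\<omega>\<close>-narrow: finitely many translates of any neighbourhood of \<open>e\<close> cover \<open>G\<^sub>e\<close>.
  If \<open>{e}\<close> is a \<open>G\<^sub>\<delta>\<close>-set, countable compactness and regularity turn this into a countable
  neighbourhood base at \<open>e\<close>, whose finitely many translates give a countable base of \<open>G\<^sub>e\<close>.
  So \<open>S\<close> is regular, Hausdorff and second countable, and Urysohn's metrization theorem applies.
\<close>

section \<open>General topology\<close>

lemma regular_space_closure_of_subset:
  "regular_space X \<longleftrightarrow>
     (\<forall>W x. openin X W \<and> x \<in> W \<longrightarrow> (\<exists>U. openin X U \<and> x \<in> U \<and> X closure_of U \<subseteq> W))"
  unfolding neighbourhood_base_of_closedin[symmetric] neighbourhood_base_of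
proof (intro all_cong1 imp_cong refl iffI)
  fix W x
  assume "\<exists>U V. openin X U \<and> closedin X V \<and> x \<in> U \<and> U \<subseteq> V \<and> V \<subseteq> W"
  then show "\<exists>U. openin X U \<and> x \<in> U \<and> X closure_of U \<subseteq> W"
    by (meson closure_of_minimal order_trans)
next
  fix W x
  assume "\<exists>U. openin X U \<and> x \<in> U \<and> X closure_of U \<subseteq> W"
  then show "\<exists>U V. openin X U \<and> closedin X V \<and> x \<in> U \<and> U \<subseteq> V \<and> V \<subseteq> W"
    by (meson closedin_closure_of closure_of_subset openin_subset)
qed

lemma gdelta_in_finite_Union:
  "finite \<A> \<Longrightarrow> (\<And>A. A \<in> \<A> \<Longrightarrow> gdelta_in X A) \<Longrightarrow> gdelta_in X (\<Union>\<A>)"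
  by (induction rule: finite_induct) (simp_all add: gdelta_in_Un)

lemma continuous_map_diagonal_neighbourhood:
  assumes "continuous_map (prod_topology X X) Y h" "a \<in> topspace X" "openin Y U" "h (a, a) \<in> U"
  obtains W where "openin X W" "a \<in> W" "\<And>p q. p \<in> W \<Longrightarrow> q \<in> W \<Longrightarrow> h (p, q) \<in> U"
proof -
  define Q where "Q = {z \<in> topspace (prod_topology X X). h z \<in> U}"
  have "openin (prod_topology X X) Q"
    unfolding Q_def using assms(1,3) by (rule openin_continuous_map_preimage)
  moreover have "(a, a) \<in> Q"
    using assms(2,4) by (simp add: Q_def)
  ultimately obtain V1 V2 where "openin X V1" "openin X V2" "a \<in> V1" "a \<in> V2" "V1 \<times> V2 \<subseteq> Q"
    unfolding openin_prod_topology_alt by (elim allE impE exE conjE)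
  then show thesis
    by (intro that[of "V1 \<inter> V2"]) (auto simp: Q_def)
qed

lemma countable_cover_imp_second_countable:
  assumes "countable \<A>" "topspace X \<subseteq> \<Union>\<A>"
    and "\<forall>A\<in>\<A>. \<exists>\<B>. countable \<B> \<and> (\<forall>B\<in>\<B>. openin X B) \<and>
           (\<forall>U x. openin X U \<and> x \<in> U \<and> x \<in> A \<longrightarrow> (\<exists>B\<in>\<B>. x \<in> B \<and> B \<subseteq> U))"
  shows "second_countable X"
proof -
  obtain \<B> where \<B>: "\<forall>A\<in>\<A>. countable (\<B> A) \<and> (\<forall>B\<in>\<B> A. openin X B) \<and>
      (\<forall>U x. openin X U \<and> x \<in> U \<and> x \<in> A \<longrightarrow> (\<exists>B\<in>\<B> A. x \<in> B \<and> B \<subseteq> U))"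
    using bchoice[OF assms(3)] by blast
  have "countable (\<Union>(\<B> ` \<A>))"
    using \<B> \<open>countable \<A>\<close> by (intro countable_UN) auto
  moreover have "\<forall>B\<in>\<Union>(\<B> ` \<A>). openin X B"
    using \<B> by blast
  moreover have "\<exists>B\<in>\<Union>(\<B> ` \<A>). x \<in> B \<and> B \<subseteq> U" if U: "openin X U" "x \<in> U" for U x
  proof -
    obtain A where "A \<in> \<A>" "x \<in> A"
      using assms(2) openin_subset[OF U(1)] U(2) by blast
    then have "\<exists>B\<in>\<B> A. x \<in> B \<and> B \<subseteq> U"
      using \<B> U by blast
    with \<open>A \<in> \<A>\<close> show ?thesis
      by blast
  qed
  ultimately show ?thesis
    unfolding second_countable_def by (intro exI[of _ "\<Union>(\<B> ` \<A>)"]) blast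
qed

lemma regular_second_countable_nested_base:
  assumes "regular_space X" "second_countable X"
  obtains \<B> where "countable \<B>" "\<And>B. B \<in> \<B> \<Longrightarrow> openin X B"
    "\<And>U x. openin X U \<Longrightarrow> x \<in> U \<Longrightarrow> \<exists>B\<in>\<B>. \<exists>C\<in>\<B>. x \<in> B \<and> X closure_of B \<subseteq> C \<and> C \<subseteq> U"
proof -
  obtain \<B> where "countable \<B>" and B_open: "\<And>B. B \<in> \<B> \<Longrightarrow> openin X B"
    and B_base: "\<And>U x. openin X U \<Longrightarrow> x \<in> U \<Longrightarrow> \<exists>B\<in>\<B>. x \<in> B \<and> B \<subseteq> U"
    using assms(2) unfolding second_countable_def by metis
  have nested: "\<exists>B\<in>\<B>. \<exists>C\<in>\<B>. x \<in> B \<and> X closure_of B \<subseteq> C \<and> C \<subseteq> U"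
    if U: "openin X U" "x \<in> U" for U x
  proof -
    obtain C where C: "C \<in> \<B>" "x \<in> C" "C \<subseteq> U"
      using B_base[OF U] by blast
    then obtain V where V: "openin X V" "x \<in> V" "X closure_of V \<subseteq> C"
      using assms(1) B_open[OF \<open>C \<in> \<B>\<close>] unfolding regular_space_closure_of_subset by meson
    then obtain B where B: "B \<in> \<B>" "x \<in> B" "B \<subseteq> V"
      using B_base by blast
    then have "X closure_of B \<subseteq> C"
      using V(3) closure_of_mono[of B V X] by blast
    with B C show ?thesis
      by blast
  qed
  show thesis
    by (rule that[OF \<open>countable \<B>\<close> B_open nested])
qed

lemma regular_second_countable_Urysohn_family:
  assumes "regular_space X" "second_countable X"
  obtains \<F> where "countable \<F>"
    and "\<And>f. f \<in> \<F> \<Longrightarrow> continuous_map X (top_of_set {0..1::real}) f"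
    and "\<And>U x. openin X U \<Longrightarrow> x \<in> U \<Longrightarrow> \<exists>f\<in>\<F>. f x = 0 \<and> f ` (topspace X - U) \<subseteq> {1}"
proof -
  obtain \<B> where "countable \<B>" and B_open: "\<And>B. B \<in> \<B> \<Longrightarrow> openin X B"
    and nested: "\<And>U x. openin X U \<Longrightarrow> x \<in> U \<Longrightarrow> \<exists>B\<in>\<B>. \<exists>C\<in>\<B>. x \<in> B \<and> X closure_of B \<subseteq> C \<and> C \<subseteq> U"
    using regular_second_countable_nested_base[OF assms] by blast
  have "normal_space X"
    using assms by (intro hereditarily_inc[OF regular_second_countable_imp_hereditarily_normal_space]) simp
  define P where "P = {(B, C). B \<in> \<B> \<and> C \<in> \<B> \<and> X closure_of B \<subseteq> C}"
  have "\<forall>p\<in>P. \<exists>f. continuous_map X (top_of_set {0..1::real}) f \<and>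
          f ` (X closure_of fst p) \<subseteq> {0} \<and> f ` (topspace X - snd p) \<subseteq> {1}"
  proof
    fix p assume "p \<in> P"
    then have "closedin X (topspace X - snd p)" "disjnt (X closure_of fst p) (topspace X - snd p)"
      using B_open by (auto simp: P_def disjnt_def)
    then obtain f :: "'a \<Rightarrow> real" where "continuous_map X (top_of_set {0..1}) f"
      "f ` (X closure_of fst p) \<subseteq> {0}" "f ` (topspace X - snd p) \<subseteq> {1}"
      by (rule Urysohn_lemma[OF \<open>normal_space X\<close> closedin_closure_of _ _ zero_le_one])
    then show "\<exists>f. continuous_map X (top_of_set {0..1::real}) f \<and>
          f ` (X closure_of fst p) \<subseteq> {0} \<and> f ` (topspace X - snd p) \<subseteq> {1}"
      by blast
  qed
  then obtain u where u: "\<forall>p\<in>P. continuous_map X (top_of_set {0..1::real}) (u p) \<and>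
          u p ` (X closure_of fst p) \<subseteq> {0} \<and> u p ` (topspace X - snd p) \<subseteq> {1}"
    by (rule bchoice[elim_format]) blast
  show thesis
  proof (rule that[of "u ` P"])
    have "P \<subseteq> \<B> \<times> \<B>" by (auto simp: P_def)
    then have "countable P"
      using \<open>countable \<B>\<close> by (intro countable_subset[OF _ countable_SIGMA]) auto
    then show "countable (u ` P)" by simp
    show "continuous_map X (top_of_set {0..1}) f" if "f \<in> u ` P" for f
      using that u by blast
  next
    fix U x assume "openin X U" "x \<in> U"
    then obtain B C where "B \<in> \<B>" "C \<in> \<B>" "x \<in> B" "X closure_of B \<subseteq> C" "C \<subseteq> U"
      using nested by blast
    then have "(B, C) \<in> P"
      by (simp add: P_def)
    then have "u (B, C) ` (X closure_of B) \<subseteq> {0}" "u (B, C) ` (topspace X - C) \<subseteq> {1}"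
      using bspec[OF u \<open>(B, C) \<in> P\<close>] by simp_all
    moreover have "x \<in> X closure_of B"
      using closure_of_subset[OF openin_subset[OF B_open[OF \<open>B \<in> \<B>\<close>]]] \<open>x \<in> B\<close> by blast
    ultimately have "u (B, C) x = 0" "u (B, C) ` (topspace X - U) \<subseteq> {1}"
      using \<open>C \<subseteq> U\<close> by blast+
    with \<open>(B, C) \<in> P\<close> show "\<exists>f\<in>u ` P. f x = 0 \<and> f ` (topspace X - U) \<subseteq> {1}"
      by blast
  qed
qed

lemma evaluation_cube_neighbourhood:
  assumes "\<And>g. g \<in> \<F> \<Longrightarrow> continuous_map X (top_of_set {0..1::real}) g"
    and "f \<in> \<F>" "x \<in> topspace X" "f x = 0"
  obtains W where "openin (product_topology (\<lambda>g. top_of_set {0..1::real}) \<F>) W"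
    "(\<lambda>g\<in>\<F>. g x) \<in> W" "\<forall>y. (\<lambda>g\<in>\<F>. g y) \<in> W \<longrightarrow> f y \<noteq> 1"
proof -
  define W where "W = (\<Pi>\<^sub>E g\<in>\<F>. if g = f then {0..<1} else {0..1::real})"
  have "openin (top_of_set {0..1}) {0..<1::real}"
    using open_real_greaterThanLessThan[of "-1" 1] by (force simp: openin_open)
  then have "openin (product_topology (\<lambda>g. top_of_set {0..1::real}) \<F>) W"
    by (auto simp: W_def openin_PiE_gen)
  moreover have "g x \<in> {0..1}" if "g \<in> \<F>" for g
    using assms(1)[OF that] \<open>x \<in> topspace X\<close> by (auto simp: continuous_map_def)
  then have "(\<lambda>g\<in>\<F>. g x) \<in> W"
    using assms(4) by (auto simp: W_def)
  moreover have "\<forall>y. (\<lambda>g\<in>\<F>. g y) \<in> W \<longrightarrow> f y \<noteq> 1"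
  proof (intro allI impI)
    fix y assume "(\<lambda>g\<in>\<F>. g y) \<in> W"
    from PiE_mem[OF this[unfolded W_def] \<open>f \<in> \<F>\<close>] show "f y \<noteq> 1"
      using \<open>f \<in> \<F>\<close> by simp
  qed
  ultimately show thesis
    by (rule that)
qed

lemma embedding_map_evaluation_cube:
  assumes "t1_space X"
    and cont: "\<And>f. f \<in> \<F> \<Longrightarrow> continuous_map X (top_of_set {0..1::real}) f"
    and sep: "\<And>U x. openin X U \<Longrightarrow> x \<in> U \<Longrightarrow> \<exists>f\<in>\<F>. f x = 0 \<and> f ` (topspace X - U) \<subseteq> {1}"
  shows "embedding_map X (product_topology (\<lambda>f. top_of_set {0..1::real}) \<F>) (\<lambda>x. \<lambda>f\<in>\<F>. f x)"
proof -
  define Y where "Y = product_topology (\<lambda>f. top_of_set {0..1::real}) \<F>"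
  define ev where "ev = (\<lambda>x. \<lambda>f\<in>\<F>. f x)"
  have "inj_on ev (topspace X)"
  proof (rule inj_onI, rule ccontr)
    fix x y assume xy: "x \<in> topspace X" "y \<in> topspace X" "ev x = ev y" "x \<noteq> y"
    have "openin X (topspace X - {y})"
      using \<open>t1_space X\<close> unfolding t1_space_openin_delete_alt by simp
    then obtain f where "f \<in> \<F>" "f x = 0" "f y = 1"
      using sep[of "topspace X - {y}" x] xy by auto
    then show False
      using fun_cong[OF \<open>ev x = ev y\<close>, of f] by (simp add: ev_def)
  qed
  define ev' where "ev' = inv_into (topspace X) ev"
  have ev': "ev' (ev x) = x" if "x \<in> topspace X" for x
    unfolding ev'_def using \<open>inj_on ev (topspace X)\<close> that by (rule inv_into_f_f)
  have "continuous_map (subtopology Y (ev ` topspace X)) X ev'"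
  proof (clarsimp simp add: continuous_map_atin limitin_atin openin_subtopology_alt ev')
    fix x U
    assume "x \<in> topspace X" "openin X U" "x \<in> U"
    then obtain f where f: "f \<in> \<F>" "f x = 0" "f ` (topspace X - U) \<subseteq> {1}"
      using sep by blast
    obtain W where "openin Y W" "ev x \<in> W" and W: "\<forall>y. ev y \<in> W \<longrightarrow> f y \<noteq> 1"
      unfolding Y_def ev_def
      by (rule evaluation_cube_neighbourhood[OF cont f(1) \<open>x \<in> topspace X\<close> f(2)])
    moreover have "ev' (ev y) \<in> U" if "y \<in> topspace X" "ev y \<in> W" for y
      using that W f(3) ev' by auto
    ultimately show "\<exists>W. openin Y W \<and> ev x \<in> W \<and> ev' ` (ev ` topspace X \<inter> W - {ev x}) \<subseteq> U"
      by (intro exI[of _ W]) blast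
  qed
  moreover have "continuous_map X Y ev"
    using cont by (auto simp: Y_def ev_def continuous_map_componentwise)
  ultimately have "homeomorphic_maps X (subtopology Y (ev ` topspace X)) ev ev'"
    using ev' by (auto simp: homeomorphic_maps_def continuous_map_in_subtopology)
  then show ?thesis
    unfolding embedding_map_def homeomorphic_map_maps Y_def ev_def by blast
qed

theorem regular_second_countable_imp_metrizable_space:
  assumes "regular_space X" "t1_space X" "second_countable X"
  shows "metrizable_space X"
proof -
  obtain \<F> where "countable \<F>"
    and cont: "\<And>f. f \<in> \<F> \<Longrightarrow> continuous_map X (top_of_set {0..1::real}) f"
    and sep: "\<And>U x. openin X U \<Longrightarrow> x \<in> U \<Longrightarrow> \<exists>f\<in>\<F>. f x = 0 \<and> f ` (topspace X - U) \<subseteq> {1}"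
    using regular_second_countable_Urysohn_family[OF assms(1,3)] by blast
  let ?Y = "product_topology (\<lambda>f. top_of_set {0..1::real}) \<F>"
  have "countable {f \<in> \<F>. \<nexists>a. topspace (top_of_set {0..1::real}) \<subseteq> {a}}"
    using \<open>countable \<F>\<close> by (simp add: countable_Collect)
  then have "metrizable_space ?Y"
    by (simp add: metrizable_space_product_topology metrizable_space_subtopology
        metrizable_space_euclidean)
  then have "metrizable_space (subtopology ?Y ((\<lambda>x. \<lambda>f\<in>\<F>. f x) ` topspace X))"
    by (rule metrizable_space_subtopology)
  moreover have "X homeomorphic_space subtopology ?Y ((\<lambda>x. \<lambda>f\<in>\<F>. f x) ` topspace X)"
    by (rule embedding_map_imp_homeomorphic_space[OF embedding_map_evaluation_cube[OF assms(2) cont sep]])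
  ultimately show ?thesis
    using homeomorphic_metrizable_space by metis
qed

section \<open>Countable compactness\<close>

lemma ex_sequence_avoiding_finite_subsets:
  assumes "\<And>F. finite F \<Longrightarrow> F \<subseteq> C \<Longrightarrow> \<exists>y\<in>C. \<forall>a\<in>F. R a y"
  shows "\<exists>g :: nat \<Rightarrow> 'a. (\<forall>n. g n \<in> C) \<and> (\<forall>k n. k < n \<longrightarrow> R (g k) (g n))"
proof -
  have "\<forall>F\<in>{F. finite F \<and> F \<subseteq> C}. \<exists>y. y \<in> C \<and> (\<forall>a\<in>F. R a y)"
    using assms by blast
  then obtain pick where pick: "\<forall>F\<in>{F. finite F \<and> F \<subseteq> C}. pick F \<in> C \<and> (\<forall>a\<in>F. R a (pick F))"
    by (rule bchoice[elim_format]) blast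
  define B where "B = rec_nat {} (\<lambda>_ F. insert (pick F) F)"
  have B_0: "B 0 = {}" and B_Suc: "B (Suc n) = insert (pick (B n)) (B n)" for n
    by (simp_all add: B_def)
  have B: "finite (B n) \<and> B n \<subseteq> C" for n
    by (induction n) (use pick in \<open>auto simp: B_0 B_Suc\<close>)
  have B_mono: "pick (B k) \<in> B n" if "k < n" for k n
    using that by (induction n) (auto simp: B_Suc less_Suc_eq)
  have "pick (B n) \<in> C" for n
    using pick B by blast
  moreover have "R (pick (B k)) (pick (B n))" if "k < n" for k n
    using pick B B_mono[OF that] by blast
  ultimately show ?thesis
    by (intro exI[of _ "\<lambda>n. pick (B n)"]) blast
qed

lemma countably_compact_space_closure_of_range_not_covered:
  fixes U :: "nat \<Rightarrow> 'a set"
  assumes "countably_compact_space X"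
    and U_open: "\<And>n. openin X (U n)" and x_in: "\<And>n. x n \<in> U n"
    and "disjoint_family U"
  shows "\<not> X closure_of (range x) \<subseteq> (\<Union>n. U n)"
proof
  assume closure_sub: "X closure_of (range x) \<subseteq> (\<Union>n. U n)"
  define \<C> where "\<C> = insert (topspace X - X closure_of (range x)) (range U)"
  have "countable \<C>"
    by (simp add: \<C>_def)
  moreover have "\<forall>C\<in>\<C>. openin X C"
    using U_open by (auto simp: \<C>_def)
  moreover have "topspace X \<subseteq> \<Union>\<C>"
    using closure_sub by (auto simp: \<C>_def)
  ultimately obtain \<F> where "\<F> \<subseteq> \<C>" "finite \<F>" "topspace X \<subseteq> \<Union>\<F>"
    using assms(1) unfolding countably_compact_space_def by (elim allE impE) blast+
  have "inj U"
  proof (rule injI, rule ccontr)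
    fix i j assume "U i = U j" "i \<noteq> j"
    then show False
      using x_in[of i] \<open>disjoint_family U\<close> by (auto simp: disjoint_family_on_def)
  qed
  with \<open>finite \<F>\<close> have "finite (U -` \<F>)"
    by (rule finite_vimageI)
  then obtain n where "U n \<notin> \<F>"
    using ex_new_if_finite[OF infinite_UNIV_nat] by blast
  have "x n \<in> topspace X"
    using openin_subset[OF U_open] x_in by blast
  then obtain C where "C \<in> \<F>" "x n \<in> C"
    using \<open>topspace X \<subseteq> \<Union>\<F>\<close> by blast
  moreover have "x n \<in> X closure_of (range x)"
    using \<open>x n \<in> topspace X\<close> closure_of_subset_Int[of X "range x"] by blast
  ultimately obtain k where "C = U k" "k \<noteq> n"
    using \<open>\<F> \<subseteq> \<C>\<close> \<open>U n \<notin> \<F>\<close> by (auto simp: \<C>_def)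
  then show False
    using \<open>x n \<in> C\<close> x_in[of n] \<open>disjoint_family U\<close> by (auto simp: disjoint_family_on_def)
qed

lemma countably_compact_space_Inter_closure_of_subset:
  assumes "countably_compact_space X" "countable \<W>" "openin X U"
    and "topspace X \<inter> \<Inter>((\<lambda>W. X closure_of W) ` \<W>) \<subseteq> U"
  obtains \<F> where "finite \<F>" "\<F> \<subseteq> \<W>" "topspace X \<inter> \<Inter>\<F> \<subseteq> U"
proof -
  define \<C> where "\<C> = insert U ((\<lambda>W. topspace X - X closure_of W) ` \<W>)"
  have "countable \<C>" using \<open>countable \<W>\<close> by (simp add: \<C>_def)
  moreover have "\<forall>C\<in>\<C>. openin X C"
    using \<open>openin X U\<close> by (auto simp: \<C>_def)
  moreover have "topspace X \<subseteq> \<Union>\<C>"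
  proof
    fix y assume "y \<in> topspace X"
    show "y \<in> \<Union>\<C>"
    proof (cases "y \<in> U")
      case False
      then obtain W where "W \<in> \<W>" "y \<notin> X closure_of W"
        using assms(4) \<open>y \<in> topspace X\<close> by blast
      then show ?thesis
        using \<open>y \<in> topspace X\<close> by (auto simp: \<C>_def)
    qed (simp add: \<C>_def)
  qed
  ultimately obtain \<D> where "\<D> \<subseteq> \<C>" "finite \<D>" "topspace X \<subseteq> \<Union>\<D>"
    using assms(1) unfolding countably_compact_space_def by (elim allE impE) blast+
  moreover have "\<D> - {U} \<subseteq> (\<lambda>W. topspace X - X closure_of W) ` \<W>"
    using \<open>\<D> \<subseteq> \<C>\<close> by (auto simp: \<C>_def)
  ultimately obtain \<F> where \<F>: "\<F> \<subseteq> \<W>" "finite \<F>"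
      "\<D> - {U} = (\<lambda>W. topspace X - X closure_of W) ` \<F>"
    using finite_subset_image[OF finite_Diff] by meson
  have "topspace X \<inter> \<Inter>\<F> \<subseteq> U"
  proof (rule subsetI, rule ccontr)
    fix z assume z: "z \<in> topspace X \<inter> \<Inter>\<F>" "z \<notin> U"
    then obtain D where "D \<in> \<D> - {U}" "z \<in> D"
      using \<open>topspace X \<subseteq> \<Union>\<D>\<close> by blast
    then obtain W where "W \<in> \<F>" "z \<notin> X closure_of W"
      using \<F>(3) by auto
    then show False
      using z closure_of_subset_Int[of X W] by blast
  qed
  then show thesis
    by (rule that[OF \<F>(2,1)])
qed

lemma regular_gdelta_point_closures:
  assumes "regular_space X" "gdelta_in X {a}"
  obtains \<W> where "countable \<W>" "\<forall>W\<in>\<W>. openin X W \<and> a \<in> W"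
    "topspace X \<inter> \<Inter>((\<lambda>W. X closure_of W) ` \<W>) \<subseteq> {a}"
proof -
  obtain \<U> where "countable \<U>" and \<U>_open: "\<And>T. T \<in> \<U> \<Longrightarrow> openin X T" and "\<Inter>\<U> = {a}"
    using assms(2) unfolding gdelta_in_alt intersection_of_def by auto
  have "\<forall>T\<in>\<U>. \<exists>W. openin X W \<and> a \<in> W \<and> X closure_of W \<subseteq> T"
  proof
    fix T assume "T \<in> \<U>"
    then have "openin X T" "a \<in> T" using \<U>_open \<open>\<Inter>\<U> = {a}\<close> by auto
    then show "\<exists>W. openin X W \<and> a \<in> W \<and> X closure_of W \<subseteq> T"
      using assms(1) unfolding regular_space_closure_of_subset by meson
  qed
  then obtain W where W: "\<forall>T\<in>\<U>. openin X (W T) \<and> a \<in> W T \<and> X closure_of (W T) \<subseteq> T"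
    by (rule bchoice[elim_format]) blast
  have "topspace X \<inter> \<Inter>((\<lambda>V. X closure_of V) ` W ` \<U>) \<subseteq> \<Inter>\<U>"
  proof (intro subsetI InterI)
    fix z T assume "z \<in> topspace X \<inter> \<Inter>((\<lambda>V. X closure_of V) ` W ` \<U>)" "T \<in> \<U>"
    then have "z \<in> X closure_of (W T)" by blast
    then show "z \<in> T" using W \<open>T \<in> \<U>\<close> by blast
  qed
  show thesis
  proof (rule that[of "W ` \<U>"])
    show "countable (W ` \<U>)"
      using \<open>countable \<U>\<close> by simp
    show "\<forall>V\<in>W ` \<U>. openin X V \<and> a \<in> V"
      using W by blast
    show "topspace X \<inter> \<Inter>((\<lambda>V. X closure_of V) ` W ` \<U>) \<subseteq> {a}"
      using \<open>topspace X \<inter> \<Inter>((\<lambda>V. X closure_of V) ` W ` \<U>) \<subseteq> \<Inter>\<U>\<close> \<open>\<Inter>\<U> = {a}\<close> by simp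
  qed
qed

lemma countably_compact_regular_gdelta_point_countable_base:
  assumes "countably_compact_space X" "regular_space X" "gdelta_in X {a}"
  obtains \<V> where "countable \<V>" "\<And>V. V \<in> \<V> \<Longrightarrow> openin X V \<and> a \<in> V"
    "\<And>U. openin X U \<Longrightarrow> a \<in> U \<Longrightarrow> \<exists>V\<in>\<V>. V \<subseteq> U"
proof -
  obtain \<W> where "countable \<W>" and \<W>: "\<forall>W\<in>\<W>. openin X W \<and> a \<in> W"
    and closures: "topspace X \<inter> \<Inter>((\<lambda>W. X closure_of W) ` \<W>) \<subseteq> {a}"
    by (rule regular_gdelta_point_closures[OF assms(2,3)])
  have "a \<in> topspace X"
    using gdelta_in_subset[OF assms(3)] by blast
  define \<V> where "\<V> = (\<lambda>\<F>. topspace X \<inter> \<Inter>\<F>) ` {\<F>. finite \<F> \<and> \<F> \<subseteq> \<W>}"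
  show thesis
  proof (rule that[of \<V>])
    show "countable \<V>"
      unfolding \<V>_def using \<open>countable \<W>\<close> by (intro countable_image countable_Collect_finite_subset)
    show "openin X V \<and> a \<in> V" if "V \<in> \<V>" for V
    proof -
      obtain \<F> where \<F>: "finite \<F>" "\<F> \<subseteq> \<W>" "V = topspace X \<inter> \<Inter>\<F>"
        using \<open>V \<in> \<V>\<close> unfolding \<V>_def by blast
      have "openin X (topspace X \<inter> \<Inter>\<F>)"
        using \<F>(1,2) \<W> by (intro openin_Int_Inter) auto
      moreover have "a \<in> topspace X \<inter> \<Inter>\<F>"
        using \<F>(2) \<W> \<open>a \<in> topspace X\<close> by auto
      ultimately show ?thesis
        using \<F>(3) by simp
    qed
  next
    fix U assume "openin X U" "a \<in> U"
    with closures have "topspace X \<inter> \<Inter>((\<lambda>W. X closure_of W) ` \<W>) \<subseteq> U"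
      by blast
    then obtain \<F> where "finite \<F>" "\<F> \<subseteq> \<W>" "topspace X \<inter> \<Inter>\<F> \<subseteq> U"
      by (rule countably_compact_space_Inter_closure_of_subset[OF assms(1) \<open>countable \<W>\<close> \<open>openin X U\<close>])
    then show "\<exists>V\<in>\<V>. V \<subseteq> U"
      by (intro bexI[of _ "topspace X \<inter> \<Inter>\<F>"]) (auto simp: \<V>_def)
  qed
qed

section \<open>Clifford semigroups\<close>

locale topological_clifford =
  fixes X :: "'a topology" and m :: "'a \<Rightarrow> 'a \<Rightarrow> 'a"
  assumes topological_clifford_semigroup: "topological_clifford_semigroup X m"
begin

abbreviation S :: "'a set" where "S \<equiv> topspace X"
abbreviation cinv :: "'a \<Rightarrow> 'a" where "cinv \<equiv> clifford_inv S m"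
abbreviation E :: "'a set" where "E \<equiv> idempotents S m"
abbreviation G :: "'a \<Rightarrow> 'a set" where "G \<equiv> group_component S m"

lemma clifford_semigroup: "clifford_semigroup S m"
  using topological_clifford_semigroup by (simp add: topological_clifford_semigroup_def)

lemma mult_closed: "x \<in> S \<Longrightarrow> y \<in> S \<Longrightarrow> m x y \<in> S"
  using clifford_semigroup by (simp add: clifford_semigroup_def)

lemma mult_assoc: "x \<in> S \<Longrightarrow> y \<in> S \<Longrightarrow> z \<in> S \<Longrightarrow> m (m x y) z = m x (m y z)"
  using clifford_semigroup by (simp add: clifford_semigroup_def)

lemma ex1_inverse: "x \<in> S \<Longrightarrow> \<exists>!y. y \<in> S \<and> m (m x y) x = x \<and> m (m y x) y = y"
  using clifford_semigroup by (simp add: clifford_semigroup_def)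

lemma mult_cinv_commute: "x \<in> S \<Longrightarrow> m x (cinv x) = m (cinv x) x"
  using clifford_semigroup by (simp add: clifford_semigroup_def)

lemma cinv_closed: "x \<in> S \<Longrightarrow> cinv x \<in> S"
  and mult_cinv_mult: "x \<in> S \<Longrightarrow> m (m x (cinv x)) x = x"
  and cinv_mult_cinv: "x \<in> S \<Longrightarrow> m (m (cinv x) x) (cinv x) = cinv x"
  using theI'[OF ex1_inverse] unfolding clifford_inv_def by blast+

lemma cinv_unique:
  assumes "x \<in> S" "y \<in> S" "m (m x y) x = x" "m (m y x) y = y"
  shows "cinv x = y"
  unfolding clifford_inv_def using assms by (intro the1_equality ex1_inverse) auto

lemma idempotents_iff: "e \<in> E \<longleftrightarrow> e \<in> S \<and> m e e = e"
  by (simp add: idempotents_def)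

lemma group_component_iff: "x \<in> G e \<longleftrightarrow> x \<in> S \<and> m x (cinv x) = e"
  by (simp add: group_component_def)

lemma cinv_idempotent: "e \<in> E \<Longrightarrow> cinv e = e"
  by (rule cinv_unique) (auto simp: idempotents_iff)

lemma idempotent_in_group_component: "e \<in> E \<Longrightarrow> e \<in> G e"
  by (simp add: group_component_iff cinv_idempotent) (simp add: idempotents_iff)

lemma mult_cinv_idempotent: "x \<in> S \<Longrightarrow> m x (cinv x) \<in> E"
proof -
  assume x: "x \<in> S"
  then have "m (m x (cinv x)) (m x (cinv x)) = m (m (m x (cinv x)) x) (cinv x)"
    by (simp add: cinv_closed mult_assoc mult_closed)
  also have "\<dots> = m x (cinv x)"
    using x by (simp add: mult_cinv_mult)
  finally show ?thesis
    using x by (simp add: idempotents_iff cinv_closed mult_closed)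
qed

lemma group_component_unique: "x \<in> G e \<Longrightarrow> x \<in> G f \<Longrightarrow> e = f"
  by (simp add: group_component_iff)

lemma Union_group_components: "\<Union>(G ` E) = S"
  using mult_cinv_idempotent by (auto simp: group_component_iff)

lemma idempotents_Int_group_component: "e \<in> E \<Longrightarrow> E \<inter> G e = {e}"
  using idempotent_in_group_component cinv_idempotent
  by (auto simp: group_component_iff idempotents_iff)

lemma continuous_map_mult:
  assumes "continuous_map Z X f" "continuous_map Z X g"
  shows "continuous_map Z X (\<lambda>z. m (f z) (g z))"
proof -
  have "continuous_map (prod_topology X X) X (\<lambda>(x, y). m x y)"
    using topological_clifford_semigroup by (simp add: topological_clifford_semigroup_def)
  from continuous_map_compose[OF continuous_map_pairedI[OF assms] this]
  show ?thesis by (simp add: o_def)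
qed

lemma continuous_map_cinv:
  assumes "continuous_map Z X f"
  shows "continuous_map Z X (\<lambda>z. cinv (f z))"
proof -
  have "continuous_map X X cinv"
    using topological_clifford_semigroup by (simp add: topological_clifford_semigroup_def)
  from continuous_map_compose[OF assms this]
  show ?thesis by (simp add: o_def)
qed

lemma continuous_map_constant: "c \<in> S \<Longrightarrow> continuous_map Z X (\<lambda>z. c)"
  by simp

lemma continuous_map_mult_left: "c \<in> S \<Longrightarrow> continuous_map X X (m c)"
  using continuous_map_mult[OF continuous_map_constant continuous_map_id[unfolded id_def]] .

lemmas continuous_map_clifford_intros =
  continuous_map_mult continuous_map_cinv continuous_map_constant continuous_map_mult_left
  continuous_map_fst continuous_map_snd continuous_map_id[unfolded id_def]

end

locale clifford_group_component = topological_clifford +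
  fixes e :: 'a
  assumes idempotent: "e \<in> E"
begin

lemma unit_in_S [simp]: "e \<in> S"
  and cinv_unit [simp]: "cinv e = e"
  and unit_in_G [simp]: "e \<in> G e"
  using idempotent cinv_idempotent idempotent_in_group_component by (auto simp: idempotents_iff)

lemma mem_S_if_mem_G [simp]: "x \<in> G e \<Longrightarrow> x \<in> S"
  and mult_cinv_right [simp]: "x \<in> G e \<Longrightarrow> m x (cinv x) = e"
  and mult_cinv_left [simp]: "x \<in> G e \<Longrightarrow> m (cinv x) x = e"
  and cinv_in_S [simp]: "x \<in> G e \<Longrightarrow> cinv x \<in> S"
  using mult_cinv_commute cinv_closed by (auto simp: group_component_iff)

lemma mult_unit_left [simp]: "x \<in> G e \<Longrightarrow> m e x = x"
  using mult_cinv_mult[of x] by simp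

lemma mult_unit_right [simp]: "x \<in> G e \<Longrightarrow> m x e = x"
  using mult_cinv_mult[of x] mult_assoc[of x "cinv x" x] by simp

lemma cinv_in_G [simp]: "x \<in> G e \<Longrightarrow> cinv x \<in> G e"
  and cinv_cinv [simp]: "x \<in> G e \<Longrightarrow> cinv (cinv x) = x"
proof -
  assume x: "x \<in> G e"
  have "cinv (cinv x) = x"
    using x cinv_mult_cinv[of x] mult_cinv_mult[of x] by (intro cinv_unique) simp_all
  \<comment> \<open>instantiated: as a simp rule, \<open>group_component_iff\<close> loops with \<open>mem_S_if_mem_G\<close>\<close>
  with x show "cinv x \<in> G e" "cinv (cinv x) = x"
    unfolding group_component_iff[of "cinv x"] by simp_all
qed

lemma mult_cancel_left [simp]: "x \<in> G e \<Longrightarrow> y \<in> G e \<Longrightarrow> m x (m (cinv x) y) = y"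
  and mult_cinv_cancel_left [simp]: "x \<in> G e \<Longrightarrow> y \<in> G e \<Longrightarrow> m (cinv x) (m x y) = y"
  using mult_assoc[of x "cinv x" y] mult_assoc[of "cinv x" x y] by simp_all

lemma mult_in_G [simp]: "x \<in> G e \<Longrightarrow> y \<in> G e \<Longrightarrow> m x y \<in> G e"
  and cinv_mult [simp]: "x \<in> G e \<Longrightarrow> y \<in> G e \<Longrightarrow> cinv (m x y) = m (cinv y) (cinv x)"
proof -
  assume x: "x \<in> G e" and y: "y \<in> G e"
  define a b where "a = m x y" and "b = m (cinv y) (cinv x)"
  have ab: "a \<in> S" "b \<in> S"
    using x y by (simp_all add: a_def b_def mult_closed)
  have "m a b = e" "m b a = e"
    using x y by (simp_all add: a_def b_def mult_closed mult_assoc)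
  have "m e a = m (m e x) y"
    unfolding a_def by (rule mult_assoc[symmetric]) (use x y in simp_all)
  moreover have "m e b = m (m e (cinv y)) (cinv x)"
    unfolding b_def by (rule mult_assoc[symmetric]) (use x y in simp_all)
  ultimately have "m e a = a" "m e b = b"
    using x y by (simp_all add: a_def b_def)
  have "cinv a = b"
    using ab by (rule cinv_unique) (simp_all add: \<open>m a b = e\<close> \<open>m b a = e\<close> \<open>m e a = a\<close> \<open>m e b = b\<close>)
  moreover have "a \<in> G e"
    unfolding group_component_iff using ab \<open>cinv a = b\<close> \<open>m a b = e\<close> by simp
  ultimately show "cinv (m x y) = m (cinv y) (cinv x)" "m x y \<in> G e"
    by (simp_all only: a_def b_def)
qed

lemma mult_assoc_G [simp]: "x \<in> G e \<Longrightarrow> y \<in> G e \<Longrightarrow> z \<in> G e \<Longrightarrow> m (m x y) z = m x (m y z)"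
  by (simp add: mult_assoc)

end

section \<open>Clopen group components\<close>

locale clopen_group_component = clifford_group_component +
  assumes openin_G: "openin X (G e)" and closedin_G: "closedin X (G e)"
begin

lemma closure_of_neighbourhood_subset:
  assumes "x \<in> G e" "openin X U" "x \<in> U"
  obtains V where "openin X V" "x \<in> V" "X closure_of V \<subseteq> U"
proof -
  let ?h = "\<lambda>z. m (m (fst z) (cinv (snd z))) x"
  have "continuous_map (prod_topology X X) X ?h"
    using assms(1) by (intro continuous_map_clifford_intros) simp
  then obtain W where "openin X W" "x \<in> W" and W: "\<And>p q. p \<in> W \<Longrightarrow> q \<in> W \<Longrightarrow> ?h (p, q) \<in> U"
    by (rule continuous_map_diagonal_neighbourhood[where a = x and U = U]) (use assms in simp_all)
  define V where "V = W \<inter> G e"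
  have "openin X V"
    unfolding V_def using \<open>openin X W\<close> openin_G by (rule openin_Int)
  moreover have "x \<in> V"
    using \<open>x \<in> W\<close> assms(1) by (simp add: V_def)
  moreover have "X closure_of V \<subseteq> U"
  proof
    fix y assume y: "y \<in> X closure_of V"
    have "X closure_of V \<subseteq> G e"
      by (rule closure_of_minimal) (auto simp: V_def closedin_G)
    with y have "y \<in> G e" by blast
    define N where "N = {z \<in> S. m (m x (cinv y)) z \<in> V}"
    have "continuous_map X X (m (m x (cinv y)))"
      using assms(1) \<open>y \<in> G e\<close> by (intro continuous_map_mult_left) simp
    then have "openin X N"
      unfolding N_def using \<open>openin X V\<close> by (rule openin_continuous_map_preimage)
    moreover have "y \<in> N"
      using assms(1) \<open>y \<in> G e\<close> \<open>x \<in> V\<close> by (simp add: N_def)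
    ultimately obtain z where "z \<in> V" "z \<in> N"
      using y unfolding in_closure_of by blast
    txt \<open>Now \<open>y = z b\<^sup>-\<^sup>1 x\<close> with \<open>z\<close> and \<open>b = x y\<^sup>-\<^sup>1 z\<close> both in \<open>W\<close>.\<close>
    then have "?h (z, m (m x (cinv y)) z) \<in> U"
      using W by (simp add: V_def N_def)
    moreover have "?h (z, m (m x (cinv y)) z) = y"
      using assms(1) \<open>y \<in> G e\<close> \<open>z \<in> V\<close> by (simp add: V_def)
    ultimately show "y \<in> U" by simp
  qed
  ultimately show thesis
    by (rule that)
qed

lemma neighbourhood_mult_cinv_subset:
  assumes "openin X V" "e \<in> V"
  obtains W where "openin X W" "e \<in> W" "W \<subseteq> G e" "\<forall>p\<in>W. \<forall>q\<in>W. m p (cinv q) \<in> V"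
proof -
  let ?h = "\<lambda>z. m (fst z) (cinv (snd z))"
  have "continuous_map (prod_topology X X) X ?h"
    by (intro continuous_map_clifford_intros)
  then obtain W where "openin X W" "e \<in> W" and W: "\<And>p q. p \<in> W \<Longrightarrow> q \<in> W \<Longrightarrow> ?h (p, q) \<in> V"
    by (rule continuous_map_diagonal_neighbourhood[where a = e and U = V]) (use assms in simp_all)
  show thesis
  proof (rule that[of "W \<inter> G e"])
    show "openin X (W \<inter> G e)"
      using \<open>openin X W\<close> openin_G by (rule openin_Int)
  qed (use \<open>e \<in> W\<close> W in auto)
qed

text \<open>The translate \<open>a (U \<inter> G e)\<close>, written as a preimage so that its openness is immediate.\<close>

definition left_translate :: "'a \<Rightarrow> 'a set \<Rightarrow> 'a set"
  where "left_translate a U = {y \<in> G e. m (cinv a) y \<in> U}"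

lemma openin_left_translate: "a \<in> G e \<Longrightarrow> openin X U \<Longrightarrow> openin X (left_translate a U)"
  unfolding left_translate_def
  by (rule openin_continuous_map_preimage_gen[OF continuous_map_mult_left openin_G]) simp_all

lemma left_translate_self: "a \<in> G e \<Longrightarrow> e \<in> U \<Longrightarrow> a \<in> left_translate a U"
  by (simp add: left_translate_def)

lemma left_translates_disjoint:
  assumes "\<forall>p\<in>W. \<forall>q\<in>W. m p (cinv q) \<in> V" "a \<in> G e" "b \<in> G e" "m (cinv a) b \<notin> V"
  shows "left_translate a W \<inter> left_translate b W = {}"
proof (rule ccontr)
  assume "left_translate a W \<inter> left_translate b W \<noteq> {}"
  then obtain y where y: "y \<in> G e" "m (cinv a) y \<in> W" "m (cinv b) y \<in> W"
    by (auto simp: left_translate_def)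
  then have "m (m (cinv a) y) (cinv (m (cinv b) y)) \<in> V"
    using assms(1) by blast
  then show False
    using y assms(2-4) by simp
qed

lemma closure_of_subset_left_translates:
  assumes "openin X W" "e \<in> W" "A \<subseteq> G e"
  shows "X closure_of A \<subseteq> (\<Union>a\<in>A. left_translate a W)"
proof
  fix y assume y: "y \<in> X closure_of A"
  have "X closure_of A \<subseteq> G e"
    by (rule closure_of_minimal) (use assms(3) closedin_G in auto)
  with y have "y \<in> G e" by blast
  define N where "N = {z \<in> S. m (cinv z) y \<in> W}"
  have "continuous_map X X (\<lambda>z. m (cinv z) y)"
    using \<open>y \<in> G e\<close> by (intro continuous_map_clifford_intros) simp_all
  then have "openin X N"
    unfolding N_def using \<open>openin X W\<close> by (rule openin_continuous_map_preimage)
  moreover have "y \<in> N"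
    using \<open>y \<in> G e\<close> \<open>e \<in> W\<close> by (simp add: N_def)
  ultimately obtain a where "a \<in> A" "a \<in> N"
    using y unfolding in_closure_of by blast
  then show "y \<in> (\<Union>a\<in>A. left_translate a W)"
    using \<open>y \<in> G e\<close> by (auto simp: N_def left_translate_def)
qed

lemma finite_left_translates_cover:
  assumes "countably_compact_space X" "openin X V" "e \<in> V"
  obtains F where "finite F" "F \<subseteq> G e" "G e \<subseteq> (\<Union>a\<in>F. left_translate a V)"
proof -
  obtain W where "openin X W" "e \<in> W" "W \<subseteq> G e" and W: "\<forall>p\<in>W. \<forall>q\<in>W. m p (cinv q) \<in> V"
    by (rule neighbourhood_mult_cinv_subset[OF assms(2,3)])
  note cover = that
  txt \<open>Otherwise there are \<open>g\<^sub>n \<in> G e\<close> with \<open>g\<^sub>k\<^sup>-\<^sup>1 g\<^sub>n \<notin> V\<close> for \<open>k < n\<close>; the translates \<open>g\<^sub>n W\<close>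
    are then pairwise disjoint open sets isolating the points \<open>g\<^sub>n\<close>.\<close>
  show thesis
  proof (rule ccontr)
    assume "\<not> thesis"
    have "\<exists>y\<in>G e. \<forall>a\<in>F. m (cinv a) y \<notin> V" if "finite F" "F \<subseteq> G e" for F
    proof -
      have "\<not> G e \<subseteq> (\<Union>a\<in>F. left_translate a V)"
        using cover that \<open>\<not> thesis\<close> by blast
      then show ?thesis
        by (auto simp: left_translate_def)
    qed
    from ex_sequence_avoiding_finite_subsets[OF this]
    obtain g :: "nat \<Rightarrow> 'a" where g: "\<And>n. g n \<in> G e"
      and g_far: "\<And>k n. k < n \<Longrightarrow> m (cinv (g k)) (g n) \<notin> V"
      by blast
    let ?U = "\<lambda>n. left_translate (g n) W"
    have "disjoint_family ?U"
      unfolding disjoint_family_on_def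
    proof (intro ballI impI)
      fix i j :: nat assume "i \<noteq> j"
      then consider "i < j" | "j < i" by linarith
      then show "?U i \<inter> ?U j = {}"
        by cases (use left_translates_disjoint[OF W] g g_far in blast)+
    qed
    moreover have "X closure_of (range g) \<subseteq> (\<Union>n. ?U n)"
      using closure_of_subset_left_translates[OF \<open>openin X W\<close> \<open>e \<in> W\<close>, of "range g"] g by auto
    moreover have "openin X (?U n)" "g n \<in> ?U n" for n
      using g \<open>openin X W\<close> \<open>e \<in> W\<close> by (simp_all add: openin_left_translate left_translate_self)
    ultimately show False
      using countably_compact_space_closure_of_range_not_covered[OF assms(1), of ?U g] by blast
  qed
qed

lemma neighbourhood_left_translate_subset:
  assumes "openin X U" "y \<in> U" "y \<in> G e"
  obtains W where "openin X W" "e \<in> W" "\<forall>a\<in>G e. y \<in> left_translate a W \<longrightarrow> left_translate a W \<subseteq> U"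
proof -
  let ?h = "\<lambda>z. m y (m (cinv (fst z)) (snd z))"
  have "continuous_map (prod_topology X X) X ?h"
    using \<open>y \<in> G e\<close> by (intro continuous_map_clifford_intros) simp
  then obtain W where "openin X W" "e \<in> W" and W: "\<And>p q. p \<in> W \<Longrightarrow> q \<in> W \<Longrightarrow> ?h (p, q) \<in> U"
    by (rule continuous_map_diagonal_neighbourhood[where a = e and U = U]) (use assms in simp_all)
  have "left_translate a W \<subseteq> U" if "a \<in> G e" "y \<in> left_translate a W" for a
  proof
    fix z assume "z \<in> left_translate a W"
    then have "?h (m (cinv a) y, m (cinv a) z) \<in> U"
      using W \<open>y \<in> left_translate a W\<close> by (auto simp: left_translate_def)
    moreover have "?h (m (cinv a) y, m (cinv a) z) = z"
      using \<open>a \<in> G e\<close> \<open>y \<in> G e\<close> \<open>z \<in> left_translate a W\<close> by (simp add: left_translate_def)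
    ultimately show "z \<in> U" by simp
  qed
  then show thesis
    using that \<open>openin X W\<close> \<open>e \<in> W\<close> by blast
qed

lemma countable_base_at_group_component:
  assumes "countably_compact_space X" "countable \<V>"
    and \<V>_open: "\<And>V. V \<in> \<V> \<Longrightarrow> openin X V \<and> e \<in> V"
    and \<V>_base: "\<And>U. openin X U \<Longrightarrow> e \<in> U \<Longrightarrow> \<exists>V\<in>\<V>. V \<subseteq> U"
  obtains \<B> where "countable \<B>" "\<And>B. B \<in> \<B> \<Longrightarrow> openin X B"
    "\<And>U y. openin X U \<Longrightarrow> y \<in> U \<Longrightarrow> y \<in> G e \<Longrightarrow> \<exists>B\<in>\<B>. y \<in> B \<and> B \<subseteq> U"
proof -
  have "\<forall>V\<in>\<V>. \<exists>F. finite F \<and> F \<subseteq> G e \<and> G e \<subseteq> (\<Union>a\<in>F. left_translate a V)"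
  proof
    fix V assume "V \<in> \<V>"
    obtain F where "finite F" "F \<subseteq> G e" "G e \<subseteq> (\<Union>a\<in>F. left_translate a V)"
      by (rule finite_left_translates_cover[OF assms(1), of V]) (use \<V>_open[OF \<open>V \<in> \<V>\<close>] in simp_all)
    then show "\<exists>F. finite F \<and> F \<subseteq> G e \<and> G e \<subseteq> (\<Union>a\<in>F. left_translate a V)"
      by blast
  qed
  then obtain F where F: "\<forall>V\<in>\<V>. finite (F V) \<and> F V \<subseteq> G e \<and> G e \<subseteq> (\<Union>a\<in>F V. left_translate a V)"
    by (rule bchoice[elim_format]) blast
  define \<B> where "\<B> = (\<Union>V\<in>\<V>. (\<lambda>a. left_translate a V) ` F V)"
  show thesis
  proof (rule that[of \<B>])
    show "countable \<B>"
      unfolding \<B>_def using \<open>countable \<V>\<close> F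
      by (intro countable_UN countable_image) (auto intro: countable_finite)
    show "openin X B" if "B \<in> \<B>" for B
      using that F \<V>_open openin_left_translate unfolding \<B>_def by blast
  next
    fix U y assume "openin X U" "y \<in> U" "y \<in> G e"
    then obtain W where "openin X W" "e \<in> W"
      and W: "\<forall>a\<in>G e. y \<in> left_translate a W \<longrightarrow> left_translate a W \<subseteq> U"
      by (rule neighbourhood_left_translate_subset)
    obtain V where "V \<in> \<V>" "V \<subseteq> W"
      using \<V>_base[OF \<open>openin X W\<close> \<open>e \<in> W\<close>] by blast
    then obtain a where "a \<in> F V" "y \<in> left_translate a V"
      using F \<open>y \<in> G e\<close> by blast
    moreover have "left_translate a V \<subseteq> left_translate a W"
      using \<open>V \<subseteq> W\<close> by (auto simp: left_translate_def)
    moreover have "a \<in> G e"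
      using F \<open>V \<in> \<V>\<close> \<open>a \<in> F V\<close> by blast
    moreover have "left_translate a V \<in> \<B>"
      unfolding \<B>_def using \<open>V \<in> \<V>\<close> \<open>a \<in> F V\<close> by blast
    ultimately show "\<exists>B\<in>\<B>. y \<in> B \<and> B \<subseteq> U"
      using W by blast
  qed
qed

end

section \<open>Strong semilattices of topological groups\<close>

locale strong_semilattice_clifford = topological_clifford +
  assumes strong_semilattice: "strong_semilattice_of_top_groups X m"
begin

lemma openin_iff_group_components:
  "U \<subseteq> S \<Longrightarrow> openin X U \<longleftrightarrow> (\<forall>e\<in>E. openin (subtopology X (G e)) (U \<inter> G e))"
  using strong_semilattice unfolding strong_semilattice_of_top_groups_def Let_def by blast

lemma openin_Union_group_components:
  assumes "A \<subseteq> E"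
  shows "openin X (\<Union>(G ` A))"
proof -
  have "openin (subtopology X (G f)) (\<Union>(G ` A) \<inter> G f)" if "f \<in> E" for f
  proof (cases "f \<in> A")
    case True
    then have "\<Union>(G ` A) \<inter> G f = G f"
      by blast
    then show ?thesis
      by (simp add: openin_subtopology_refl group_component_iff subset_iff)
  next
    case False
    then have "\<Union>(G ` A) \<inter> G f = {}"
      using group_component_unique by blast
    then show ?thesis
      by simp
  qed
  moreover have "\<Union>(G ` A) \<subseteq> S"
    by (auto simp: group_component_iff)
  ultimately show ?thesis
    using openin_iff_group_components by blast
qed

lemma closedin_Union_group_components:
  assumes "A \<subseteq> E"
  shows "closedin X (\<Union>(G ` A))"
proof -
  have "S - \<Union>(G ` A) = \<Union>(G ` (E - A))"
  proof
    show "S - \<Union>(G ` A) \<subseteq> \<Union>(G ` (E - A))"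
      using Union_group_components by blast
    show "\<Union>(G ` (E - A)) \<subseteq> S - \<Union>(G ` A)"
      by (auto simp: group_component_iff)
  qed
  then show ?thesis
    using openin_Union_group_components[of "E - A"]
    by (simp add: closedin_def group_component_iff subset_iff)
qed

lemma clopen_group_componentI: "e \<in> E \<Longrightarrow> clopen_group_component X m e"
  using topological_clifford_axioms
    openin_Union_group_components[of "{e}"] closedin_Union_group_components[of "{e}"]
  unfolding clopen_group_component_def clopen_group_component_axioms_def
    clifford_group_component_def clifford_group_component_axioms_def
  by simp

lemma finite_idempotents:
  assumes "countably_compact_space X"
  shows "finite E"
proof (rule ccontr)
  assume "infinite E"
  then obtain f :: "nat \<Rightarrow> 'a" where "inj f" "range f \<subseteq> E"
    using infinite_countable_subset by blast
  then have f_in: "f n \<in> G (f n)" for n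
    using idempotent_in_group_component by blast
  have "disjoint_family (\<lambda>n. G (f n))"
    unfolding disjoint_family_on_def
    using f_in group_component_unique \<open>inj f\<close> by (metis disjoint_iff inj_eq)
  moreover have "X closure_of (range f) \<subseteq> (\<Union>n. G (f n))"
    using closedin_Union_group_components[OF \<open>range f \<subseteq> E\<close>] f_in
    by (intro closure_of_minimal) (auto simp: image_image)
  moreover have "openin X (G (f n))" for n
    using openin_Union_group_components[of "{f n}"] \<open>range f \<subseteq> E\<close> by auto
  ultimately show False
    using countably_compact_space_closure_of_range_not_covered[OF assms, of "\<lambda>n. G (f n)" f] f_in
    by blast
qed

lemma regular: "regular_space X"
  unfolding regular_space_closure_of_subset
proof (intro allI impI, elim conjE)
  fix W x assume "openin X W" "x \<in> W"
  then have "x \<in> S"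
    using openin_subset by blast
  then have "x \<in> G (m x (cinv x))"
    by (simp add: group_component_iff)
  interpret clopen_group_component X m "m x (cinv x)"
    using \<open>x \<in> S\<close> by (intro clopen_group_componentI mult_cinv_idempotent)
  obtain U where "openin X U" "x \<in> U" "X closure_of U \<subseteq> W"
    by (rule closure_of_neighbourhood_subset[OF \<open>x \<in> G (m x (cinv x))\<close> \<open>openin X W\<close> \<open>x \<in> W\<close>])
  then show "\<exists>U. openin X U \<and> x \<in> U \<and> X closure_of U \<subseteq> W"
    by blast
qed

lemma gdelta_in_group_component_iff:
  assumes "e \<in> E"
  shows "gdelta_in (subtopology X (G e)) {e} \<longleftrightarrow> gdelta_in X {e}"
proof
  assume "gdelta_in (subtopology X (G e)) {e}"
  then obtain T where "gdelta_in X T" "{e} = T \<inter> G e"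
    unfolding gdelta_in_subtopology by blast
  moreover have "gdelta_in X (G e)"
    using openin_Union_group_components[of "{e}"] assms by (simp add: open_imp_gdelta_in)
  ultimately show "gdelta_in X {e}"
    by (simp add: gdelta_in_Int)
next
  assume "gdelta_in X {e}"
  moreover have "{e} = {e} \<inter> G e"
    using idempotent_in_group_component[OF assms] by blast
  ultimately show "gdelta_in (subtopology X (G e)) {e}"
    unfolding gdelta_in_subtopology by blast
qed

lemma gdelta_idempotents_iff:
  assumes "finite E"
  shows "gdelta_in X E \<longleftrightarrow> (\<forall>e\<in>E. gdelta_in (subtopology X (G e)) {e})"
proof
  assume "gdelta_in X E"
  then show "\<forall>e\<in>E. gdelta_in (subtopology X (G e)) {e}"
    using idempotents_Int_group_component by (metis gdelta_in_subtopology)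
next
  assume "\<forall>e\<in>E. gdelta_in (subtopology X (G e)) {e}"
  then have "gdelta_in X {e}" if "e \<in> E" for e
    using gdelta_in_group_component_iff that by blast
  moreover have "E = \<Union>((\<lambda>e. {e}) ` E)"
    by blast
  ultimately show "gdelta_in X E"
    using gdelta_in_finite_Union[of "(\<lambda>e. {e}) ` E" X] assms by auto
qed

lemma second_countable_if_gdelta_idempotents:
  assumes "countably_compact_space X" "gdelta_in X E"
  shows "second_countable X"
proof (rule countable_cover_imp_second_countable)
  show "countable (G ` E)"
    using finite_idempotents[OF assms(1)] by (simp add: countable_finite)
  show "S \<subseteq> \<Union>(G ` E)"
    using Union_group_components by simp
  have "\<exists>\<B>. countable \<B> \<and> (\<forall>B\<in>\<B>. openin X B) \<and>
          (\<forall>U y. openin X U \<and> y \<in> U \<and> y \<in> G e \<longrightarrow> (\<exists>B\<in>\<B>. y \<in> B \<and> B \<subseteq> U))"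
    if "e \<in> E" for e
  proof -
    interpret clopen_group_component X m e
      using \<open>e \<in> E\<close> by (rule clopen_group_componentI)
    have "gdelta_in (subtopology X (G e)) {e}"
      using gdelta_idempotents_iff[OF finite_idempotents[OF assms(1)]] assms(2) \<open>e \<in> E\<close> by blast
    then have "gdelta_in X {e}"
      using gdelta_in_group_component_iff[OF \<open>e \<in> E\<close>] by blast
    then obtain \<V> where \<V>: "countable \<V>" "\<And>V. V \<in> \<V> \<Longrightarrow> openin X V \<and> e \<in> V"
      "\<And>U. openin X U \<Longrightarrow> e \<in> U \<Longrightarrow> \<exists>V\<in>\<V>. V \<subseteq> U"
      by (rule countably_compact_regular_gdelta_point_countable_base[OF assms(1) regular]) blast
    show ?thesis
      by (rule countable_base_at_group_component[OF assms(1) \<V>]) blast+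
  qed
  then show "\<forall>A\<in>G ` E. \<exists>\<B>. countable \<B> \<and> (\<forall>B\<in>\<B>. openin X B) \<and>
          (\<forall>U y. openin X U \<and> y \<in> U \<and> y \<in> A \<longrightarrow> (\<exists>B\<in>\<B>. y \<in> B \<and> B \<subseteq> U))"
    by blast
qed

lemma metrizable_iff_gdelta_idempotents:
  assumes "Hausdorff_space X" "countably_compact_space X"
  shows "metrizable_space X \<longleftrightarrow> gdelta_in X E"
proof
  assume "metrizable_space X"
  moreover have "closedin X E"
    by (rule closedin_Hausdorff_finite[OF assms(1) _ finite_idempotents[OF assms(2)]])
      (auto simp: idempotents_iff)
  ultimately show "gdelta_in X E"
    by (rule closed_imp_gdelta_in)
next
  assume "gdelta_in X E"
  with assms(2) have "second_countable X"
    by (rule second_countable_if_gdelta_idempotents)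
  with regular Hausdorff_imp_t1_space[OF assms(1)] show "metrizable_space X"
    by (rule regular_second_countable_imp_metrizable_space)
qed

end

theorem proposition4p5:
  fixes X :: "'a topology" and m :: "'a \<Rightarrow> 'a \<Rightarrow> 'a"
  assumes "topological_clifford_semigroup X m"
    and "Hausdorff_space X"
    and "countably_compact_space X"
    and "strong_semilattice_of_top_groups X m"
  shows "(metrizable_space X \<longleftrightarrow> gdelta_in X (idempotents (topspace X) m)) \<and>
         (gdelta_in X (idempotents (topspace X) m) \<longleftrightarrow>
           (\<forall>e \<in> idempotents (topspace X) m.
              gdelta_in (subtopology X (group_component (topspace X) m e)) {e}))"
proof -
  interpret strong_semilattice_clifford X m
    using assms(1,4) by unfold_locales
  show ?thesis
    by (rule conjI[OF metrizable_iff_gdelta_idempotents[OF assms(2,3)]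
          gdelta_idempotents_iff[OF finite_idempotents[OF assms(3)]]])
qed

end
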